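(* Let $\mathcal N$ be a single-mode phase-insensitive $s$-sender bosonic Gaussian multiple-access channel that is global covariant ($\delta_k=0$ for all $k$) or global contravariant ($\delta_k=1$ for all $k$). Then $\mathcal N=\Psi\circ\mathcal B$, where $\mathcal B$ is a passive linear-optical (beamsplitter) map taking the $s$ input modes to the single mode $\hat a_{\rm mix}=\sum_k v_k\hat a_{A_k}$ for a unit vector $v\in\mathbb C^s$ (discarding the other output ports), and $\Psi$ is a single-mode phase-insensitive bosonic Gaussian channel that is covariant in the global covariant case and contravariant in the global contravariant case.
   Context: Single-mode phase-insensitive bosonic Gaussian MAC: sender $k$ controls one mode $A_k$; the output is $\hat a_B=\sum_{k=1}^sw_k((1-\delta_k)\hat a_{A_k}+\delta_k\hat a^\dagger_{A_k})+u_1\hat a_{E',1}+u_2\hat a^\dagger_{E',2}$ with $w_k\in\mathbb C$, $\delta_k\in\{0,1\}$, $u_1,u_2\ge0$, environment modes in vacuum, $\sum_k(1-2\delta_k)|w_k|^2+u_1^2-u_2^2=1$. A single-mode phase-insensitive bosonic Gaussian channel is $\hat a_{\rm out}=w((1-\delta)\hat a_{\rm in}+\delta\hat a^\dagger_{\rm in})+u_1\hat e_1+u_2\hat e_2^\dagger$ with vacuum environment modes and $(1-2\delta)|w|^2+u_1^2-u_2^2=1$; covariant if $\delta=0$, contravariant if $\delta=1$. *)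

theory Defs
  imports Complex_Main
begin

text \<open>Heisenberg-picture model. A mode-linear operator expression is a finite formal
linear combination of annihilation and creation operators of the modes involved:
coefficient X m False of the annihilation operator of mode m, coefficient X m True
of its creation operator. Modes: In k is the input mode A_k of sender k (k < s),
Env j is an environment mode (vacuum) E'_j.\<close>

datatype mode = In nat | Env nat

type_synonym opexpr = "mode \<Rightarrow> bool \<Rightarrow> complex"

definition lc_add :: "opexpr \<Rightarrow> opexpr \<Rightarrow> opexpr" where
  "lc_add X Y = (\<lambda>m d. X m d + Y m d)"

definition lc_scale :: "complex \<Rightarrow> opexpr \<Rightarrow> opexpr" where
  "lc_scale c X = (\<lambda>m d. c * X m d)"

definition lc_sum :: "nat set \<Rightarrow> (nat \<Rightarrow> opexpr) \<Rightarrow> opexpr" where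
  "lc_sum A F = (\<lambda>m d. \<Sum>k\<in>A. F k m d)"

definition adj :: "opexpr \<Rightarrow> opexpr" where
  "adj X = (\<lambda>m d. cnj (X m (\<not> d)))"

definition ann :: "mode \<Rightarrow> opexpr" where
  "ann m = (\<lambda>m' d. if m' = m \<and> \<not> d then 1 else 0)"

definition cre :: "mode \<Rightarrow> opexpr" where
  "cre m = adj (ann m)"

definition mac_out :: "nat \<Rightarrow> (nat \<Rightarrow> complex) \<Rightarrow> (nat \<Rightarrow> bool) \<Rightarrow> real \<Rightarrow> real \<Rightarrow> opexpr" where
  "mac_out s w \<delta> u1 u2 =
     lc_add (lc_sum {..<s} (\<lambda>k. lc_scale (w k)
               (lc_add (lc_scale (1 - of_bool (\<delta> k)) (ann (In k)))
                       (lc_scale (of_bool (\<delta> k)) (cre (In k))))))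
            (lc_add (lc_scale (complex_of_real u1) (ann (Env 1)))
                    (lc_scale (complex_of_real u2) (cre (Env 2))))"

definition mac_valid :: "nat \<Rightarrow> (nat \<Rightarrow> complex) \<Rightarrow> (nat \<Rightarrow> bool) \<Rightarrow> real \<Rightarrow> real \<Rightarrow> bool" where
  "mac_valid s w \<delta> u1 u2 \<longleftrightarrow> u1 \<ge> 0 \<and> u2 \<ge> 0 \<and>
     (\<Sum>k<s. (1 - 2 * of_bool (\<delta> k)) * (cmod (w k))\<^sup>2) + u1\<^sup>2 - u2\<^sup>2 = 1"

text \<open>Single-mode phase-insensitive Gaussian channel Psi applied (Heisenberg picture)
to an input mode whose annihilation operator is the expression X:
  a_out = w ((1-delta) X + delta X^dagger) + u1 e1 + u2 e2^dagger,
with its vacuum environment modes e1, e2 taken to be Env 1, Env 2.\<close>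
definition sm_out :: "complex \<Rightarrow> bool \<Rightarrow> real \<Rightarrow> real \<Rightarrow> opexpr \<Rightarrow> opexpr" where
  "sm_out w \<delta> u1 u2 X =
     lc_add (lc_scale w (lc_add (lc_scale (1 - of_bool \<delta>) X) (lc_scale (of_bool \<delta>) (adj X))))
            (lc_add (lc_scale (complex_of_real u1) (ann (Env 1)))
                    (lc_scale (complex_of_real u2) (cre (Env 2))))"

definition sm_valid :: "complex \<Rightarrow> bool \<Rightarrow> real \<Rightarrow> real \<Rightarrow> bool" where
  "sm_valid w \<delta> u1 u2 \<longleftrightarrow> u1 \<ge> 0 \<and> u2 \<ge> 0 \<and>
     (1 - 2 * of_bool \<delta>) * (cmod w)\<^sup>2 + u1\<^sup>2 - u2\<^sup>2 = 1"

definition mix :: "nat \<Rightarrow> (nat \<Rightarrow> complex) \<Rightarrow> opexpr" where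
  "mix s v = lc_sum {..<s} (\<lambda>k. lc_scale (v k) (ann (In k)))"

definition unit_vec :: "nat \<Rightarrow> (nat \<Rightarrow> complex) \<Rightarrow> bool" where
  "unit_vec s v \<longleftrightarrow> (\<Sum>k<s. (cmod (v k))\<^sup>2) = 1"

end

theory Submission
  imports Defs
begin

text \<open>When all senders are of the same type, the coefficient vector w is its Euclidean
norm times a unit vector v (conjugated in the contravariant case, since there the
output involves the adjoint of the mixed mode). The beamsplitter keeps the mode with
coefficients v, and the norm becomes the gain of the single-mode channel; the
validity constraint then reads exactly as the single-mode one. If w = 0 any unit
vector will do.\<close>

lemma unit_vec_basis:
  assumes "s \<ge> 1"
  shows "unit_vec s (\<lambda>k. of_bool (k = 0))"
proof -
  have "(\<Sum>k<s. (cmod (of_bool (k = 0) :: complex))\<^sup>2) = (\<Sum>k<s. if k = 0 then 1 else 0)"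
    by (intro sum.cong) auto
  then show ?thesis
    using assms by (simp add: unit_vec_def)
qed

lemma unit_vec_normalize:
  assumes "s \<ge> 1"
  obtains v where "unit_vec s v"
    and "\<forall>k<s. w k = complex_of_real (sqrt (\<Sum>k<s. (cmod (w k))\<^sup>2)) * v k"
proof (cases "(\<Sum>k<s. (cmod (w k))\<^sup>2) = 0")
  case True
  then have "\<forall>k<s. w k = 0"
    by (simp add: sum_nonneg_eq_0_iff)
  with True show ?thesis
    using that unit_vec_basis[OF assms] by simp
next
  case False
  define N where "N = sqrt (\<Sum>k<s. (cmod (w k))\<^sup>2)"
  have "N\<^sup>2 = (\<Sum>k<s. (cmod (w k))\<^sup>2)"
    unfolding N_def by (simp add: sum_nonneg)
  with False have "unit_vec s (\<lambda>k. w k / complex_of_real N)"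
    by (simp add: unit_vec_def norm_divide power_divide sum_divide_distrib[symmetric])
  moreover have "N \<noteq> 0"
    using False unfolding N_def by (simp add: sum_nonneg)
  ultimately show ?thesis
    using that unfolding N_def by simp
qed

lemma unit_vec_normalize_cnj:
  assumes "s \<ge> 1"
  obtains v where "unit_vec s v"
    and "\<forall>k<s. w k = complex_of_real (sqrt (\<Sum>k<s. (cmod (w k))\<^sup>2)) * cnj (v k)"
proof -
  let ?N = "sqrt (\<Sum>k<s. (cmod (w k))\<^sup>2)"
  obtain v where v: "unit_vec s v" and cnj_w: "\<forall>k<s. cnj (w k) = complex_of_real ?N * v k"
    by (rule unit_vec_normalize[OF assms, of "\<lambda>k. cnj (w k)", unfolded complex_mod_cnj])
  have "\<forall>k<s. w k = complex_of_real ?N * cnj (v k)"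
    using cnj_w by (metis complex_cnj_cnj complex_cnj_complex_of_real complex_cnj_mult)
  with v show ?thesis
    by (rule that)
qed

lemma sm_valid_of_mac_valid:
  assumes "mac_valid s w \<delta> u1 u2" and "\<forall>k<s. \<delta> k = d"
  shows "sm_valid (complex_of_real (sqrt (\<Sum>k<s. (cmod (w k))\<^sup>2))) d u1 u2"
proof -
  have "(\<Sum>k<s. (1 - 2 * of_bool (\<delta> k)) * (cmod (w k))\<^sup>2)
      = (1 - 2 * of_bool d) * (\<Sum>k<s. (cmod (w k))\<^sup>2)"
    using assms(2) by (simp add: sum_distrib_left)
  with assms(1) show ?thesis
    by (simp add: mac_valid_def sm_valid_def sum_nonneg)
qed

lemma mac_out_eq_sm_out_mix:
  assumes "\<forall>k<s. \<delta> k = d" and "\<forall>k<s. w k = c * (if d then cnj (v k) else v k)"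
  shows "mac_out s w \<delta> u1 u2 = sm_out c d u1 u2 (mix s v)"
proof (intro ext)
  fix m b
  have "(\<Sum>k<s. w k * ((1 - of_bool (\<delta> k)) * ann (In k) m b + of_bool (\<delta> k) * cre (In k) m b))
      = c * ((1 - of_bool d) * (\<Sum>k<s. v k * ann (In k) m b)
             + of_bool d * cnj (\<Sum>k<s. v k * ann (In k) m (\<not> b)))"
    using assms by (cases d) (auto simp: sum_distrib_left cre_def adj_def intro!: sum.cong)
  then show "mac_out s w \<delta> u1 u2 m b = sm_out c d u1 u2 (mix s v) m b"
    by (simp add: mac_out_def sm_out_def mix_def lc_add_def lc_scale_def lc_sum_def adj_def)
qed

theorem lemma1:
  fixes s :: nat and w :: "nat \<Rightarrow> complex" and \<delta> :: "nat \<Rightarrow> bool" and u1 u2 :: real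
  assumes "s \<ge> 1"
    and "mac_valid s w \<delta> u1 u2"
    and "(\<forall>k<s. \<not> \<delta> k) \<or> (\<forall>k<s. \<delta> k)"
  shows "\<exists>v w' \<delta>' u1' u2'. unit_vec s v \<and> sm_valid w' \<delta>' u1' u2'
           \<and> ((\<forall>k<s. \<not> \<delta> k) \<longrightarrow> \<not> \<delta>') \<and> ((\<forall>k<s. \<delta> k) \<longrightarrow> \<delta>')
           \<and> mac_out s w \<delta> u1 u2 = sm_out w' \<delta>' u1' u2' (mix s v)"
proof -
  obtain d where d: "\<forall>k<s. \<delta> k = d"
    using assms(3) by blast
  define N where "N = complex_of_real (sqrt (\<Sum>k<s. (cmod (w k))\<^sup>2))"
  obtain v where v: "unit_vec s v" and w: "\<forall>k<s. w k = N * (if d then cnj (v k) else v k)"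
  proof (cases d)
    case True
    obtain v where "unit_vec s v" "\<forall>k<s. w k = N * cnj (v k)"
      unfolding N_def by (rule unit_vec_normalize_cnj[OF assms(1)])
    with True that show ?thesis
      by simp
  next
    case False
    obtain v where "unit_vec s v" "\<forall>k<s. w k = N * v k"
      unfolding N_def by (rule unit_vec_normalize[OF assms(1)])
    with False that show ?thesis
      by simp
  qed
  have "sm_valid N d u1 u2"
    unfolding N_def using sm_valid_of_mac_valid[OF assms(2) d] .
  moreover have "mac_out s w \<delta> u1 u2 = sm_out N d u1 u2 (mix s v)"
    using mac_out_eq_sm_out_mix[OF d w] .
  moreover have "(\<forall>k<s. \<not> \<delta> k) \<longleftrightarrow> \<not> d" and "(\<forall>k<s. \<delta> k) \<longleftrightarrow> d"
    using d assms(1) by (auto simp: Suc_le_eq)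
  ultimately show ?thesis
    using v by blast
qed

end
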